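(* Let $(\mathcal{C},\mathbb{E},\mathfrak{s})$ satisfy (ET1) and (ET2), and let $\mathcal{I}$ be a special precovering ideal of $\mathcal{C}$. Then $(\mathcal{I},\mathcal{I}^{\perp_{\mathbb{E}}})$ is an $\mathbb{E}$-cotorsion pair, i.e. $\mathcal{I}={}^{\perp_{\mathbb{E}}}(\mathcal{I}^{\perp_{\mathbb{E}}})$.
   Context: $\mathcal{C}$ additive, $\mathbb{E}:\mathcal{C}^{\mathrm{op}}\times\mathcal{C}\to\mathrm{Ab}$ biadditive (ET1); for $\delta\in\mathbb{E}(C,A)$, $a:A\to A'$, $c:C'\to C$ put $a_\star\delta=\mathbb{E}(C,a)(\delta)$, $c^\star\delta=\mathbb{E}(c,A)(\delta)$. (ET2): $\mathfrak{s}$ is an additive realization (Nakaoka–Palu): each $\delta\in\mathbb{E}(C,A)$ is assigned an equivalence class of sequences $A\xrightarrow{x}B\xrightarrow{y}C$ (up to isomorphism of the middle term compatible with the maps), $0$ is realized by split sequences, realization respects direct sums, and if $a_\star\delta=c^\star\delta'$ ($a:A\to A'$, $c:C\to C'$) there is $b:B\to B'$ making the realizing sequences commute. Realized pairs are $\mathbb{E}$-triangles $A\to B\to C\overset{\delta}{\dashrightarrow}$; such $(a,b,c)$ are morphisms of $\mathbb{E}$-triangles. An ideal: class of morphisms with zeros, closed under sums and two-sided composition. For a class $\mathcal{M}$ of morphisms: $\mathcal{M}^{\perp_{\mathbb{E}}}=\{g:A\to Y\mid m^\star g_\star\delta=0\ \forall m\in\mathcal{M},\,m:X\to C,\ \forall\delta\in\mathbb{E}(C,A)\}$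 and ${}^{\perp_{\mathbb{E}}}\mathcal{M}=\{g:X\to C\mid g^\star m_\star\delta=0\ \forall m\in\mathcal{M},\,m:A\to Y,\ \forall\delta\in\mathbb{E}(C,A)\}$. An $\mathbb{E}$-cotorsion pair is a pair of ideals $(\mathcal{I},\mathcal{J})$ with $\mathcal{I}={}^{\perp_{\mathbb{E}}}\mathcal{J}$ and $\mathcal{J}=\mathcal{I}^{\perp_{\mathbb{E}}}$. A special $\mathcal{I}$-precover of $C$ is $i:X\to C$ in $\mathcal{I}$ with $\mathbb{E}$-triangles $A\to B\to C\overset{\delta}{\dashrightarrow}$, $A'\to X\xrightarrow{i}C\overset{\delta'}{\dashrightarrow}$ and a morphism of $\mathbb{E}$-triangles $(j,b,\mathrm{id}_C)$ between them with $j\in\mathcal{I}^{\perp_{\mathbb{E}}}$. $\mathcal{I}$ is special precovering if every object has a special $\mathcal{I}$-precover. *)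

theory Defs
  imports "HOL-Algebra.Group"
begin

record ('o, 'm) addcat =
  Ob   :: "'o set"
  Mor  :: "'m set"
  Dom  :: "'m \<Rightarrow> 'o"
  Cod  :: "'m \<Rightarrow> 'o"
  Id   :: "'o \<Rightarrow> 'm"
  Comp :: "'m \<Rightarrow> 'm \<Rightarrow> 'm"   (* Comp C g f = g o f *)
  Add  :: "'m \<Rightarrow> 'm \<Rightarrow> 'm"
  Zero :: "'o \<Rightarrow> 'o \<Rightarrow> 'm"   (* Zero C X Y : X \<rightarrow> Y *)

definition Hom :: "('o, 'm, 'z) addcat_scheme \<Rightarrow> 'o \<Rightarrow> 'o \<Rightarrow> 'm set" where
  "Hom C X Y = {f \<in> Mor C. Dom C f = X \<and> Cod C f = Y}"

definition is_category :: "('o, 'm, 'z) addcat_scheme \<Rightarrow> bool" where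
  "is_category C \<longleftrightarrow>
     (\<forall>f \<in> Mor C. Dom C f \<in> Ob C \<and> Cod C f \<in> Ob C) \<and>
     (\<forall>X \<in> Ob C. Id C X \<in> Hom C X X) \<and>
     (\<forall>X \<in> Ob C. \<forall>Y \<in> Ob C. \<forall>Z \<in> Ob C. \<forall>f \<in> Hom C X Y. \<forall>g \<in> Hom C Y Z.
        Comp C g f \<in> Hom C X Z) \<and>
     (\<forall>f \<in> Mor C. Comp C (Id C (Cod C f)) f = f \<and> Comp C f (Id C (Dom C f)) = f) \<and>
     (\<forall>f \<in> Mor C. \<forall>g \<in> Mor C. \<forall>h \<in> Mor C. Dom C g = Cod C f \<longrightarrow> Dom C h = Cod C g \<longrightarrow>
        Comp C h (Comp C g f) = Comp C (Comp C h g) f)"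

definition hom_group :: "('o, 'm, 'z) addcat_scheme \<Rightarrow> 'o \<Rightarrow> 'o \<Rightarrow> 'm monoid" where
  "hom_group C X Y = \<lparr>carrier = Hom C X Y, mult = Add C, one = Zero C X Y\<rparr>"

definition is_preadditive :: "('o, 'm, 'z) addcat_scheme \<Rightarrow> bool" where
  "is_preadditive C \<longleftrightarrow> is_category C \<and>
     (\<forall>X \<in> Ob C. \<forall>Y \<in> Ob C. comm_group (hom_group C X Y)) \<and>
     (\<forall>X \<in> Ob C. \<forall>Y \<in> Ob C. \<forall>Z \<in> Ob C. \<forall>f \<in> Hom C X Y. \<forall>f' \<in> Hom C X Y. \<forall>g \<in> Hom C Y Z.
        Comp C g (Add C f f') = Add C (Comp C g f) (Comp C g f')) \<and>
     (\<forall>X \<in> Ob C. \<forall>Y \<in> Ob C. \<forall>Z \<in> Ob C. \<forall>f \<in> Hom C X Y. \<forall>g \<in> Hom C Y Z. \<forall>g' \<in> Hom C Y Z.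
        Comp C (Add C g g') f = Add C (Comp C g f) (Comp C g' f))"

definition is_biprod ::
  "('o, 'm, 'z) addcat_scheme \<Rightarrow> 'o \<Rightarrow> 'o \<Rightarrow> 'o \<Rightarrow> 'm \<Rightarrow> 'm \<Rightarrow> 'm \<Rightarrow> 'm \<Rightarrow> bool" where
  "is_biprod C X Y P i1 i2 p1 p2 \<longleftrightarrow>
     P \<in> Ob C \<and> i1 \<in> Hom C X P \<and> i2 \<in> Hom C Y P \<and> p1 \<in> Hom C P X \<and> p2 \<in> Hom C P Y \<and>
     Comp C p1 i1 = Id C X \<and> Comp C p2 i2 = Id C Y \<and>
     Comp C p1 i2 = Zero C Y X \<and> Comp C p2 i1 = Zero C X Y \<and>
     Add C (Comp C i1 p1) (Comp C i2 p2) = Id C P"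

definition is_additive :: "('o, 'm, 'z) addcat_scheme \<Rightarrow> bool" where
  "is_additive C \<longleftrightarrow> is_preadditive C \<and>
     (\<exists>Z \<in> Ob C. Id C Z = Zero C Z Z) \<and>
     (\<forall>X \<in> Ob C. \<forall>Y \<in> Ob C. \<exists>P i1 i2 p1 p2. is_biprod C X Y P i1 i2 p1 p2)"

record ('o, 'm, 'e) extfun =
  Ext   :: "'o \<Rightarrow> 'o \<Rightarrow> 'e set"                 (* Ext E C A = E(C,A) *)
  EAdd  :: "'o \<Rightarrow> 'o \<Rightarrow> 'e \<Rightarrow> 'e \<Rightarrow> 'e"
  EZero :: "'o \<Rightarrow> 'o \<Rightarrow> 'e"
  Push  :: "'o \<Rightarrow> 'm \<Rightarrow> 'e \<Rightarrow> 'e"             (* Push E C a \<delta> = a_* \<delta> = E(C,a)(\<delta>) *)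
  Pull  :: "'o \<Rightarrow> 'm \<Rightarrow> 'e \<Rightarrow> 'e"             (* Pull E A c \<delta> = c^* \<delta> = E(c,A)(\<delta>) *)

definition ext_group :: "('o, 'm, 'e) extfun \<Rightarrow> 'o \<Rightarrow> 'o \<Rightarrow> 'e monoid" where
  "ext_group E C A = \<lparr>carrier = Ext E C A, mult = EAdd E C A, one = EZero E C A\<rparr>"

definition ET1 :: "('o, 'm, 'z) addcat_scheme \<Rightarrow> ('o, 'm, 'e) extfun \<Rightarrow> bool" where
  "ET1 C E \<longleftrightarrow>
     (\<forall>X \<in> Ob C. \<forall>A \<in> Ob C. comm_group (ext_group E X A)) \<and>
     \<comment> \<open>covariant part: \<open>E(X,-)\<close>\<close>
     (\<forall>X \<in> Ob C. \<forall>A \<in> Ob C. \<forall>A' \<in> Ob C. \<forall>a \<in> Hom C A A'.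
        (\<forall>\<delta> \<in> Ext E X A. Push E X a \<delta> \<in> Ext E X A') \<and>
        (\<forall>\<delta> \<in> Ext E X A. \<forall>\<delta>' \<in> Ext E X A.
           Push E X a (EAdd E X A \<delta> \<delta>') = EAdd E X A' (Push E X a \<delta>) (Push E X a \<delta>'))) \<and>
     (\<forall>X \<in> Ob C. \<forall>A \<in> Ob C. \<forall>\<delta> \<in> Ext E X A. Push E X (Id C A) \<delta> = \<delta>) \<and>
     (\<forall>X \<in> Ob C. \<forall>A \<in> Ob C. \<forall>A' \<in> Ob C. \<forall>A'' \<in> Ob C. \<forall>a \<in> Hom C A A'. \<forall>a' \<in> Hom C A' A''.
        \<forall>\<delta> \<in> Ext E X A. Push E X (Comp C a' a) \<delta> = Push E X a' (Push E X a \<delta>)) \<and>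
     (\<forall>X \<in> Ob C. \<forall>A \<in> Ob C. \<forall>A' \<in> Ob C. \<forall>a \<in> Hom C A A'. \<forall>a' \<in> Hom C A A'.
        \<forall>\<delta> \<in> Ext E X A. Push E X (Add C a a') \<delta> = EAdd E X A' (Push E X a \<delta>) (Push E X a' \<delta>)) \<and>
     \<comment> \<open>contravariant part: \<open>E(-,A)\<close>\<close>
     (\<forall>A \<in> Ob C. \<forall>X \<in> Ob C. \<forall>X' \<in> Ob C. \<forall>c \<in> Hom C X' X.
        (\<forall>\<delta> \<in> Ext E X A. Pull E A c \<delta> \<in> Ext E X' A) \<and>
        (\<forall>\<delta> \<in> Ext E X A. \<forall>\<delta>' \<in> Ext E X A.
           Pull E A c (EAdd E X A \<delta> \<delta>') = EAdd E X' A (Pull E A c \<delta>) (Pull E A c \<delta>'))) \<and>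
     (\<forall>A \<in> Ob C. \<forall>X \<in> Ob C. \<forall>\<delta> \<in> Ext E X A. Pull E A (Id C X) \<delta> = \<delta>) \<and>
     (\<forall>A \<in> Ob C. \<forall>X \<in> Ob C. \<forall>X' \<in> Ob C. \<forall>X'' \<in> Ob C. \<forall>c \<in> Hom C X' X. \<forall>c' \<in> Hom C X'' X'.
        \<forall>\<delta> \<in> Ext E X A. Pull E A (Comp C c c') \<delta> = Pull E A c' (Pull E A c \<delta>)) \<and>
     (\<forall>A \<in> Ob C. \<forall>X \<in> Ob C. \<forall>X' \<in> Ob C. \<forall>c \<in> Hom C X' X. \<forall>c' \<in> Hom C X' X.
        \<forall>\<delta> \<in> Ext E X A. Pull E A (Add C c c') \<delta> = EAdd E X' A (Pull E A c \<delta>) (Pull E A c' \<delta>)) \<and>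
     \<comment> \<open>bifunctoriality\<close>
     (\<forall>A \<in> Ob C. \<forall>A' \<in> Ob C. \<forall>X \<in> Ob C. \<forall>X' \<in> Ob C. \<forall>a \<in> Hom C A A'. \<forall>c \<in> Hom C X' X.
        \<forall>\<delta> \<in> Ext E X A. Pull E A' c (Push E X a \<delta>) = Push E X' a (Pull E A c \<delta>))"

text \<open>\<open>s \<delta> x y\<close>: the sequence \<open>Dom x --x--> Cod x = Dom y --y--> Cod y\<close> realizes
  \<open>\<delta> \<in> E(Cod y, Dom x)\<close>, i.e. belongs to the equivalence class \<open>\<s>(\<delta>)\<close>.\<close>
type_synonym ('e, 'm) realization = "'e \<Rightarrow> 'm \<Rightarrow> 'm \<Rightarrow> bool"

definition is_iso_pair :: "('o, 'm, 'z) addcat_scheme \<Rightarrow> 'o \<Rightarrow> 'o \<Rightarrow> 'm \<Rightarrow> 'm \<Rightarrow> bool" where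
  "is_iso_pair C X Y b b' \<longleftrightarrow> b \<in> Hom C X Y \<and> b' \<in> Hom C Y X \<and>
     Comp C b' b = Id C X \<and> Comp C b b' = Id C Y"

definition mor_dsum :: "('o, 'm, 'z) addcat_scheme \<Rightarrow> 'm \<Rightarrow> 'm \<Rightarrow> 'm \<Rightarrow> 'm \<Rightarrow> 'm \<Rightarrow> 'm \<Rightarrow> 'm" where
  "mor_dsum C pX pX' iY iY' f f' = Add C (Comp C iY (Comp C f pX)) (Comp C iY' (Comp C f' pX'))"

definition ext_dsum :: "('o, 'm, 'e) extfun \<Rightarrow> 'o \<Rightarrow> 'o \<Rightarrow> 'o \<Rightarrow> 'o \<Rightarrow>
    'm \<Rightarrow> 'm \<Rightarrow> 'm \<Rightarrow> 'm \<Rightarrow> 'e \<Rightarrow> 'e \<Rightarrow> 'e" where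
  "ext_dsum E A A' PC PA iA iA' pC pC' \<delta> \<delta>' =
     EAdd E PC PA (Push E PC iA (Pull E A pC \<delta>)) (Push E PC iA' (Pull E A' pC' \<delta>'))"

definition ET2 :: "('o, 'm, 'z) addcat_scheme \<Rightarrow> ('o, 'm, 'e) extfun \<Rightarrow> ('e, 'm) realization \<Rightarrow> bool" where
  "ET2 C E s \<longleftrightarrow>
     \<comment> \<open>realizing sequences are composable sequences \<open>A \<rightarrow> B \<rightarrow> C\<close> with \<open>\<delta> \<in> E(C,A)\<close>\<close>
     (\<forall>\<delta> x y. s \<delta> x y \<longrightarrow> x \<in> Mor C \<and> y \<in> Mor C \<and> Cod C x = Dom C y \<and>
        \<delta> \<in> Ext E (Cod C y) (Dom C x)) \<and>
     \<comment> \<open>every \<open>\<delta>\<close> has a realization\<close>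
     (\<forall>X \<in> Ob C. \<forall>A \<in> Ob C. \<forall>\<delta> \<in> Ext E X A. \<exists>x y. s \<delta> x y \<and> Dom C x = A \<and> Cod C y = X) \<and>
     \<comment> \<open>any two realizations of \<open>\<delta>\<close> are equivalent\<close>
     (\<forall>\<delta> x y x' y'. s \<delta> x y \<longrightarrow> s \<delta> x' y' \<longrightarrow> Dom C x = Dom C x' \<longrightarrow> Cod C y = Cod C y' \<longrightarrow>
        (\<exists>b b'. is_iso_pair C (Cod C x) (Cod C x') b b' \<and>
           Comp C b x = x' \<and> Comp C y' b = y)) \<and>
     \<comment> \<open>the class is closed under equivalence\<close>
     (\<forall>\<delta> x y B' b b'. s \<delta> x y \<longrightarrow> is_iso_pair C (Cod C x) B' b b' \<longrightarrow>
        s \<delta> (Comp C b x) (Comp C y b')) \<and>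
     \<comment> \<open>realization of morphisms of extensions\<close>
     (\<forall>\<delta> x y \<delta>' x' y' a c. s \<delta> x y \<longrightarrow> s \<delta>' x' y' \<longrightarrow>
        a \<in> Hom C (Dom C x) (Dom C x') \<longrightarrow> c \<in> Hom C (Cod C y) (Cod C y') \<longrightarrow>
        Push E (Cod C y) a \<delta> = Pull E (Dom C x') c \<delta>' \<longrightarrow>
        (\<exists>b \<in> Hom C (Cod C x) (Cod C x'). Comp C b x = Comp C x' a \<and> Comp C y' b = Comp C c y)) \<and>
     \<comment> \<open>additivity: \<open>0\<close> is realized by split sequences\<close>
     (\<forall>A \<in> Ob C. \<forall>X \<in> Ob C. \<forall>P iA iX pA pX. is_biprod C A X P iA iX pA pX \<longrightarrow>
        s (EZero E X A) iA pX) \<and>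
     \<comment> \<open>additivity: realization respects direct sums\<close>
     (\<forall>\<delta> x y \<delta>' x' y' PA iA iA' pA pA' PB iB iB' pB pB' PC iC iC' pC pC'.
        s \<delta> x y \<longrightarrow> s \<delta>' x' y' \<longrightarrow>
        is_biprod C (Dom C x) (Dom C x') PA iA iA' pA pA' \<longrightarrow>
        is_biprod C (Cod C x) (Cod C x') PB iB iB' pB pB' \<longrightarrow>
        is_biprod C (Cod C y) (Cod C y') PC iC iC' pC pC' \<longrightarrow>
        s (ext_dsum E (Dom C x) (Dom C x') PC PA iA iA' pC pC' \<delta> \<delta>')
          (mor_dsum C pA pA' iB iB' x x') (mor_dsum C pB pB' iC iC' y y'))"

definition is_ideal :: "('o, 'm, 'z) addcat_scheme \<Rightarrow> 'm set \<Rightarrow> bool" where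
  "is_ideal C I \<longleftrightarrow> I \<subseteq> Mor C \<and>
     (\<forall>X \<in> Ob C. \<forall>Y \<in> Ob C. Zero C X Y \<in> I) \<and>
     (\<forall>f \<in> I. \<forall>g \<in> I. Dom C f = Dom C g \<longrightarrow> Cod C f = Cod C g \<longrightarrow> Add C f g \<in> I) \<and>
     (\<forall>f \<in> I. \<forall>g \<in> Mor C. \<forall>h \<in> Mor C. Dom C g = Cod C f \<longrightarrow> Cod C h = Dom C f \<longrightarrow>
        Comp C g (Comp C f h) \<in> I)"

definition perp_right :: "('o, 'm, 'z) addcat_scheme \<Rightarrow> ('o, 'm, 'e) extfun \<Rightarrow> 'm set \<Rightarrow> 'm set" where
  "perp_right C E M = {g \<in> Mor C. \<forall>m \<in> M. \<forall>\<delta> \<in> Ext E (Cod C m) (Dom C g).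
      Pull E (Cod C g) m (Push E (Cod C m) g \<delta>) = EZero E (Dom C m) (Cod C g)}"

definition perp_left :: "('o, 'm, 'z) addcat_scheme \<Rightarrow> ('o, 'm, 'e) extfun \<Rightarrow> 'm set \<Rightarrow> 'm set" where
  "perp_left C E M = {g \<in> Mor C. \<forall>m \<in> M. \<forall>\<delta> \<in> Ext E (Cod C g) (Dom C m).
      Pull E (Cod C m) g (Push E (Cod C g) m \<delta>) = EZero E (Dom C g) (Cod C m)}"

definition is_cotorsion_pair ::
  "('o, 'm, 'z) addcat_scheme \<Rightarrow> ('o, 'm, 'e) extfun \<Rightarrow> 'm set \<Rightarrow> 'm set \<Rightarrow> bool" where
  "is_cotorsion_pair C E I J \<longleftrightarrow> is_ideal C I \<and> is_ideal C J \<and>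
     I = perp_left C E J \<and> J = perp_right C E I"

definition is_triangle_morphism :: "('o, 'm, 'z) addcat_scheme \<Rightarrow> ('o, 'm, 'e) extfun \<Rightarrow>
    ('e, 'm) realization \<Rightarrow> 'e \<Rightarrow> 'm \<Rightarrow> 'm \<Rightarrow> 'e \<Rightarrow> 'm \<Rightarrow> 'm \<Rightarrow> 'm \<Rightarrow> 'm \<Rightarrow> 'm \<Rightarrow> bool" where
  "is_triangle_morphism C E s \<delta> x y \<delta>' x' y' a b c \<longleftrightarrow>
     s \<delta> x y \<and> s \<delta>' x' y' \<and>
     a \<in> Hom C (Dom C x) (Dom C x') \<and> b \<in> Hom C (Cod C x) (Cod C x') \<and>
     c \<in> Hom C (Cod C y) (Cod C y') \<and>
     Comp C b x = Comp C x' a \<and> Comp C y' b = Comp C c y \<and>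
     Push E (Cod C y) a \<delta> = Pull E (Dom C x') c \<delta>'"

definition is_special_precover :: "('o, 'm, 'z) addcat_scheme \<Rightarrow> ('o, 'm, 'e) extfun \<Rightarrow>
    ('e, 'm) realization \<Rightarrow> 'm set \<Rightarrow> 'o \<Rightarrow> 'm \<Rightarrow> bool" where
  "is_special_precover C E s I X i \<longleftrightarrow>
     i \<in> I \<and> i \<in> Mor C \<and> Cod C i = X \<and>
     (\<exists>\<delta> x y \<delta>' x' j b.
        Cod C y = X \<and> Dom C x' \<in> Ob C \<and>
        is_triangle_morphism C E s \<delta> x y \<delta>' x' i j b (Id C X) \<and>
        j \<in> perp_right C E I)"

definition special_precovering :: "('o, 'm, 'z) addcat_scheme \<Rightarrow> ('o, 'm, 'e) extfun \<Rightarrow>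
    ('e, 'm) realization \<Rightarrow> 'm set \<Rightarrow> bool" where
  "special_precovering C E s I \<longleftrightarrow> (\<forall>X \<in> Ob C. \<exists>i. is_special_precover C E s I X i)"

end

theory Submission
  imports Defs
begin

text \<open>Every \<open>I\<close>-morphism is orthogonal to \<open>I^{\<perp>_E}\<close> by definition. Conversely let
  \<open>g : X \<rightarrow> C\<close> be orthogonal to \<open>I^{\<perp>_E}\<close> and take a special \<open>I\<close>-precover
  \<open>i : B' \<rightarrow> C\<close>, the deflation of an \<open>E\<close>-triangle realizing \<open>\<delta>'\<close>. The morphism of
  \<open>E\<close>-triangles \<open>(j, b, 1_C)\<close> gives \<open>\<delta>' = j_\<star>\<delta>\<close> with \<open>j \<in> I^{\<perp>_E}\<close>, so
  \<open>g^\<star>\<delta>' = g^\<star>j_\<star>\<delta> = 0\<close>. Comparing the split \<open>E\<close>-triangle \<open>A' \<rightarrow> A' \<oplus> X \<rightarrow> X\<close>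
  with the precover along \<open>(1, -, g)\<close>, the morphism \<open>g\<close> factors through \<open>i\<close>, hence lies in
  the ideal \<open>I\<close>. Finally \<open>M^{\<perp>_E}\<close> is an ideal for every class \<open>M\<close>, by biadditivity
  of \<open>E\<close>.\<close>

lemma Hom_iff: "f \<in> Hom C X Y \<longleftrightarrow> f \<in> Mor C \<and> Dom C f = X \<and> Cod C f = Y"
  by (simp add: Hom_def)

locale biadditive_extfun =
  fixes C :: "('o, 'm, 'z) addcat_scheme" and E :: "('o, 'm, 'e) extfun"
  assumes preadditive: "is_preadditive C"
    and ET1: "ET1 C E"
begin

lemma category: "is_category C"
  using preadditive by (simp add: is_preadditive_def)

lemma Dom_in_Ob: "f \<in> Mor C \<Longrightarrow> Dom C f \<in> Ob C"
  and Cod_in_Ob: "f \<in> Mor C \<Longrightarrow> Cod C f \<in> Ob C"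
  using category by (auto simp: is_category_def)

lemma Id_in_Hom: "X \<in> Ob C \<Longrightarrow> Id C X \<in> Hom C X X"
  using category by (simp add: is_category_def)

lemma Comp_in_Hom:
  assumes "f \<in> Hom C X Y" "g \<in> Hom C Y Z"
  shows "Comp C g f \<in> Hom C X Z"
proof -
  have "X \<in> Ob C" "Y \<in> Ob C" "Z \<in> Ob C"
    using assms Dom_in_Ob Cod_in_Ob by (auto simp: Hom_iff)
  then show ?thesis using category assms unfolding is_category_def by blast
qed

lemma Cod_Comp: "f \<in> Mor C \<Longrightarrow> g \<in> Mor C \<Longrightarrow> Dom C g = Cod C f \<Longrightarrow> Cod C (Comp C g f) = Cod C g"
  using Comp_in_Hom[of f "Dom C f" "Cod C f" g "Cod C g"] by (simp add: Hom_iff)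

lemma Comp_assoc:
  "f \<in> Mor C \<Longrightarrow> g \<in> Mor C \<Longrightarrow> h \<in> Mor C \<Longrightarrow> Dom C g = Cod C f \<Longrightarrow> Dom C h = Cod C g \<Longrightarrow>
    Comp C h (Comp C g f) = Comp C (Comp C h g) f"
  using category by (simp add: is_category_def)

lemma Comp_Id_left: "f \<in> Mor C \<Longrightarrow> Comp C (Id C (Cod C f)) f = f"
  and Comp_Id_right: "f \<in> Mor C \<Longrightarrow> Comp C f (Id C (Dom C f)) = f"
  using category by (simp_all add: is_category_def)

lemma hom_comm_group: "X \<in> Ob C \<Longrightarrow> Y \<in> Ob C \<Longrightarrow> comm_group (hom_group C X Y)"
  using preadditive by (simp add: is_preadditive_def)

lemma Zero_in_Hom: "X \<in> Ob C \<Longrightarrow> Y \<in> Ob C \<Longrightarrow> Zero C X Y \<in> Hom C X Y"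
  using comm_groupE(2)[OF hom_comm_group, of X Y] by (simp add: hom_group_def)

lemma Add_Zero_Zero: "X \<in> Ob C \<Longrightarrow> Y \<in> Ob C \<Longrightarrow> Add C (Zero C X Y) (Zero C X Y) = Zero C X Y"
  using comm_groupE(5)[OF hom_comm_group, of X Y "Zero C X Y"] Zero_in_Hom[of X Y]
  by (simp add: hom_group_def)

lemma Hom_Ob: "f \<in> Hom C X Y \<Longrightarrow> X \<in> Ob C \<and> Y \<in> Ob C"
  using Dom_in_Ob Cod_in_Ob by (auto simp: Hom_iff)

lemma Add_in_Hom: "f \<in> Hom C X Y \<Longrightarrow> g \<in> Hom C X Y \<Longrightarrow> Add C f g \<in> Hom C X Y"
  using comm_groupE(1)[OF hom_comm_group, of X Y f g] Hom_Ob[of f X Y] by (simp add: hom_group_def)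

lemma ext_comm_group: "X \<in> Ob C \<Longrightarrow> A \<in> Ob C \<Longrightarrow> comm_group (ext_group E X A)"
  using ET1 by (simp add: ET1_def)

lemma EZero_in_Ext: "X \<in> Ob C \<Longrightarrow> A \<in> Ob C \<Longrightarrow> EZero E X A \<in> Ext E X A"
  using comm_groupE(2)[OF ext_comm_group, of X A] by (simp add: ext_group_def)

lemma EAdd_EZero_EZero: "X \<in> Ob C \<Longrightarrow> A \<in> Ob C \<Longrightarrow> EAdd E X A (EZero E X A) (EZero E X A) = EZero E X A"
  using comm_groupE(5)[OF ext_comm_group, of X A "EZero E X A"] EZero_in_Ext[of X A]
  by (simp add: ext_group_def)

lemma EAdd_idem_eq_EZero:
  assumes "X \<in> Ob C" "A \<in> Ob C" "\<delta> \<in> Ext E X A" "EAdd E X A \<delta> \<delta> = \<delta>"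
  shows "\<delta> = EZero E X A"
proof -
  interpret group "ext_group E X A"
    using ext_comm_group[OF assms(1,2)] by (rule comm_group.axioms(2))
  show ?thesis using r_cancel_one[of \<delta> \<delta>] assms(3,4) by (simp add: ext_group_def)
qed

lemma Push_in_Ext:
  assumes "X \<in> Ob C" "a \<in> Hom C A A'" "\<delta> \<in> Ext E X A"
  shows "Push E X a \<delta> \<in> Ext E X A'"
proof -
  have "A \<in> Ob C" "A' \<in> Ob C" using Hom_Ob assms by blast+
  then show ?thesis using ET1 assms by (simp add: ET1_def)
qed

lemma Push_EAdd:
  assumes "X \<in> Ob C" "a \<in> Hom C A A'" "\<delta> \<in> Ext E X A" "\<delta>' \<in> Ext E X A"
  shows "Push E X a (EAdd E X A \<delta> \<delta>') = EAdd E X A' (Push E X a \<delta>) (Push E X a \<delta>')"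
proof -
  have "A \<in> Ob C" "A' \<in> Ob C" using Hom_Ob assms by blast+
  then show ?thesis using ET1 assms by (simp add: ET1_def)
qed

lemma Push_Id: "X \<in> Ob C \<Longrightarrow> A \<in> Ob C \<Longrightarrow> \<delta> \<in> Ext E X A \<Longrightarrow> Push E X (Id C A) \<delta> = \<delta>"
  using ET1 by (simp add: ET1_def)

lemma Push_Comp:
  assumes "X \<in> Ob C" "a \<in> Hom C A A'" "a' \<in> Hom C A' A''" "\<delta> \<in> Ext E X A"
  shows "Push E X (Comp C a' a) \<delta> = Push E X a' (Push E X a \<delta>)"
proof -
  have "A \<in> Ob C" "A' \<in> Ob C" "A'' \<in> Ob C" using Hom_Ob assms by blast+
  then show ?thesis using ET1 assms by (simp add: ET1_def)
qed

lemma Push_Add: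
  assumes "X \<in> Ob C" "a \<in> Hom C A A'" "a' \<in> Hom C A A'" "\<delta> \<in> Ext E X A"
  shows "Push E X (Add C a a') \<delta> = EAdd E X A' (Push E X a \<delta>) (Push E X a' \<delta>)"
proof -
  have "A \<in> Ob C" "A' \<in> Ob C" using Hom_Ob assms by blast+
  then show ?thesis using ET1 assms by (simp add: ET1_def)
qed

lemma Pull_in_Ext:
  assumes "A \<in> Ob C" "c \<in> Hom C X' X" "\<delta> \<in> Ext E X A"
  shows "Pull E A c \<delta> \<in> Ext E X' A"
proof -
  have "X' \<in> Ob C" "X \<in> Ob C" using Hom_Ob assms by blast+
  then show ?thesis using ET1 assms by (simp add: ET1_def)
qed

lemma Pull_EAdd:
  assumes "A \<in> Ob C" "c \<in> Hom C X' X" "\<delta> \<in> Ext E X A" "\<delta>' \<in> Ext E X A"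
  shows "Pull E A c (EAdd E X A \<delta> \<delta>') = EAdd E X' A (Pull E A c \<delta>) (Pull E A c \<delta>')"
proof -
  have "X' \<in> Ob C" "X \<in> Ob C" using Hom_Ob assms by blast+
  then show ?thesis using ET1 assms by (simp add: ET1_def)
qed

lemma Pull_Id: "A \<in> Ob C \<Longrightarrow> X \<in> Ob C \<Longrightarrow> \<delta> \<in> Ext E X A \<Longrightarrow> Pull E A (Id C X) \<delta> = \<delta>"
  using ET1 by (simp add: ET1_def)

lemma Pull_Push:
  assumes "a \<in> Hom C A A'" "c \<in> Hom C X' X" "\<delta> \<in> Ext E X A"
  shows "Pull E A' c (Push E X a \<delta>) = Push E X' a (Pull E A c \<delta>)"
proof -
  have "A \<in> Ob C" "A' \<in> Ob C" "X' \<in> Ob C" "X \<in> Ob C" using Hom_Ob assms by blast+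
  then show ?thesis using ET1 assms by (simp add: ET1_def)
qed

lemma Push_EZero:
  assumes "X \<in> Ob C" "a \<in> Hom C A A'"
  shows "Push E X a (EZero E X A) = EZero E X A'"
proof -
  have obs: "A \<in> Ob C" "A' \<in> Ob C" using Hom_Ob[OF assms(2)] by auto
  note zero = EZero_in_Ext[OF assms(1) obs(1)]
  show ?thesis
    using Push_EAdd[OF assms zero zero] EAdd_EZero_EZero[OF assms(1) obs(1)]
    by (intro EAdd_idem_eq_EZero[OF assms(1) obs(2) Push_in_Ext[OF assms zero]]) simp
qed

lemma Pull_EZero:
  assumes "A \<in> Ob C" "c \<in> Hom C X' X"
  shows "Pull E A c (EZero E X A) = EZero E X' A"
proof -
  have obs: "X \<in> Ob C" "X' \<in> Ob C" using Hom_Ob[OF assms(2)] by auto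
  note zero = EZero_in_Ext[OF obs(1) assms(1)]
  show ?thesis
    using Pull_EAdd[OF assms zero zero] EAdd_EZero_EZero[OF obs(1) assms(1)]
    by (intro EAdd_idem_eq_EZero[OF obs(2) assms(1) Pull_in_Ext[OF assms zero]]) simp
qed

lemma Push_Zero:
  assumes "X \<in> Ob C" "A \<in> Ob C" "A' \<in> Ob C" "\<delta> \<in> Ext E X A"
  shows "Push E X (Zero C A A') \<delta> = EZero E X A'"
proof -
  note zero = Zero_in_Hom[OF assms(2,3)]
  show ?thesis
    using Push_Add[OF assms(1) zero zero assms(4)] Add_Zero_Zero[OF assms(2,3)]
    by (intro EAdd_idem_eq_EZero[OF assms(1,3) Push_in_Ext[OF assms(1) zero assms(4)]]) simp
qed

lemma perp_rightI:
  assumes "g \<in> Mor C"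
    and "\<And>m \<delta>. m \<in> M \<Longrightarrow> \<delta> \<in> Ext E (Cod C m) (Dom C g) \<Longrightarrow>
      Pull E (Cod C g) m (Push E (Cod C m) g \<delta>) = EZero E (Dom C m) (Cod C g)"
  shows "g \<in> perp_right C E M"
  using assms by (simp add: perp_right_def)

lemma perp_rightD:
  "g \<in> perp_right C E M \<Longrightarrow> m \<in> M \<Longrightarrow> \<delta> \<in> Ext E (Cod C m) (Dom C g) \<Longrightarrow>
    Pull E (Cod C g) m (Push E (Cod C m) g \<delta>) = EZero E (Dom C m) (Cod C g)"
  by (simp add: perp_right_def)

context
  fixes M :: "'m set"
  assumes M_Mor: "M \<subseteq> Mor C"
begin

lemma Zero_in_perp_right:
  assumes "X \<in> Ob C" "Y \<in> Ob C"
  shows "Zero C X Y \<in> perp_right C E M"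
proof (rule perp_rightI)
  note zero = Zero_in_Hom[OF assms]
  show "Zero C X Y \<in> Mor C" using zero by (simp add: Hom_iff)
  fix m \<delta> assume "m \<in> M" and \<delta>: "\<delta> \<in> Ext E (Cod C m) (Dom C (Zero C X Y))"
  then have m: "m \<in> Hom C (Dom C m) (Cod C m)" "Cod C m \<in> Ob C"
    using M_Mor Cod_in_Ob by (auto simp: Hom_iff)
  show "Pull E (Cod C (Zero C X Y)) m (Push E (Cod C m) (Zero C X Y) \<delta>) =
      EZero E (Dom C m) (Cod C (Zero C X Y))"
    using Push_Zero[OF m(2) assms] Pull_EZero[OF assms(2) m(1)] zero \<delta> by (simp add: Hom_iff)
qed

lemma Add_in_perp_right:
  assumes f: "f \<in> perp_right C E M" and g: "g \<in> perp_right C E M"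
    and "f \<in> Hom C X Y" "g \<in> Hom C X Y"
  shows "Add C f g \<in> perp_right C E M"
proof (rule perp_rightI)
  have fg: "Add C f g \<in> Hom C X Y" using Add_in_Hom assms(3,4) .
  then show "Add C f g \<in> Mor C" by (simp add: Hom_iff)
  fix m \<delta> assume "m \<in> M" and \<delta>: "\<delta> \<in> Ext E (Cod C m) (Dom C (Add C f g))"
  then have m: "m \<in> Hom C (Dom C m) (Cod C m)" "Cod C m \<in> Ob C" "Dom C m \<in> Ob C" "m \<in> M"
    and \<delta>X: "\<delta> \<in> Ext E (Cod C m) X"
    using M_Mor Cod_in_Ob Dom_in_Ob fg by (auto simp: Hom_iff)
  have Y: "Y \<in> Ob C" using Hom_Ob[OF assms(3)] by simp
  have "Pull E Y m (Push E (Cod C m) (Add C f g) \<delta>)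
      = EAdd E (Dom C m) Y (Pull E Y m (Push E (Cod C m) f \<delta>)) (Pull E Y m (Push E (Cod C m) g \<delta>))"
    using Push_Add[OF m(2) assms(3,4) \<delta>X] Pull_EAdd[OF Y m(1)] Push_in_Ext[OF m(2) _ \<delta>X] assms(3,4)
    by simp
  also have "\<dots> = EZero E (Dom C m) Y"
    using perp_rightD[OF f m(4)] perp_rightD[OF g m(4)] \<delta>X assms(3,4) EAdd_EZero_EZero[OF m(3) Y]
    by (simp add: Hom_iff)
  finally show "Pull E (Cod C (Add C f g)) m (Push E (Cod C m) (Add C f g) \<delta>) =
      EZero E (Dom C m) (Cod C (Add C f g))"
    using fg by (simp add: Hom_iff)
qed

lemma postcomp_in_perp_right:
  assumes f: "f \<in> perp_right C E M" and "g \<in> Mor C" "Dom C g = Cod C f"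
  shows "Comp C g f \<in> perp_right C E M"
proof (rule perp_rightI)
  have fh: "f \<in> Hom C (Dom C f) (Cod C f)" and gh: "g \<in> Hom C (Cod C f) (Cod C g)"
    using f assms(2,3) by (auto simp: Hom_iff perp_right_def)
  have gf: "Comp C g f \<in> Hom C (Dom C f) (Cod C g)" using Comp_in_Hom[OF fh gh] .
  then show "Comp C g f \<in> Mor C" by (simp add: Hom_iff)
  fix m \<delta> assume "m \<in> M" and \<delta>: "\<delta> \<in> Ext E (Cod C m) (Dom C (Comp C g f))"
  then have m: "m \<in> Hom C (Dom C m) (Cod C m)" "Cod C m \<in> Ob C" "Dom C m \<in> Ob C" "m \<in> M"
    and \<delta>f: "\<delta> \<in> Ext E (Cod C m) (Dom C f)"
    using M_Mor Cod_in_Ob Dom_in_Ob gf by (auto simp: Hom_iff)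
  have "Pull E (Cod C g) m (Push E (Cod C m) (Comp C g f) \<delta>)
      = Push E (Dom C m) g (Pull E (Cod C f) m (Push E (Cod C m) f \<delta>))"
    using Push_Comp[OF m(2) fh gh \<delta>f] Pull_Push[OF gh m(1) Push_in_Ext[OF m(2) fh \<delta>f]] by simp
  also have "\<dots> = EZero E (Dom C m) (Cod C g)"
    using perp_rightD[OF f m(4) \<delta>f] Push_EZero[OF m(3) gh] by simp
  finally show "Pull E (Cod C (Comp C g f)) m (Push E (Cod C m) (Comp C g f) \<delta>) =
      EZero E (Dom C m) (Cod C (Comp C g f))"
    using gf by (simp add: Hom_iff)
qed

lemma precomp_in_perp_right:
  assumes f: "f \<in> perp_right C E M" and "h \<in> Mor C" "Cod C h = Dom C f"
  shows "Comp C f h \<in> perp_right C E M"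
proof (rule perp_rightI)
  have fh: "f \<in> Hom C (Dom C f) (Cod C f)" and hh: "h \<in> Hom C (Dom C h) (Dom C f)"
    using f assms(2,3) by (auto simp: Hom_iff perp_right_def)
  have fhh: "Comp C f h \<in> Hom C (Dom C h) (Cod C f)" using Comp_in_Hom[OF hh fh] .
  then show "Comp C f h \<in> Mor C" by (simp add: Hom_iff)
  fix m \<delta> assume "m \<in> M" and \<delta>: "\<delta> \<in> Ext E (Cod C m) (Dom C (Comp C f h))"
  then have m: "m \<in> M" "Cod C m \<in> Ob C" and \<delta>h: "\<delta> \<in> Ext E (Cod C m) (Dom C h)"
    using M_Mor Cod_in_Ob fhh by (auto simp: Hom_iff)
  have "Push E (Cod C m) (Comp C f h) \<delta> = Push E (Cod C m) f (Push E (Cod C m) h \<delta>)"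
    using Push_Comp[OF m(2) hh fh \<delta>h] .
  then show "Pull E (Cod C (Comp C f h)) m (Push E (Cod C m) (Comp C f h) \<delta>) =
      EZero E (Dom C m) (Cod C (Comp C f h))"
    using perp_rightD[OF f m(1) Push_in_Ext[OF m(2) hh \<delta>h]] fhh by (simp add: Hom_iff)
qed

lemma is_ideal_perp_right: "is_ideal C (perp_right C E M)"
  unfolding is_ideal_def
proof (intro conjI ballI impI)
  show "perp_right C E M \<subseteq> Mor C" by (auto simp: perp_right_def)
  show "Zero C X Y \<in> perp_right C E M" if "X \<in> Ob C" "Y \<in> Ob C" for X Y
    using Zero_in_perp_right that .
  show "Add C f g \<in> perp_right C E M"
    if "f \<in> perp_right C E M" "g \<in> perp_right C E M" "Dom C f = Dom C g" "Cod C f = Cod C g" for f g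
    using that by (intro Add_in_perp_right[of f g "Dom C f" "Cod C f"]) (auto simp: Hom_iff perp_right_def)
  show "Comp C g (Comp C f h) \<in> perp_right C E M"
    if f: "f \<in> perp_right C E M" and "g \<in> Mor C" "h \<in> Mor C" "Dom C g = Cod C f" "Cod C h = Dom C f"
    for f g h
  proof (rule postcomp_in_perp_right)
    show "Comp C f h \<in> perp_right C E M" using precomp_in_perp_right that by blast
    have "f \<in> Mor C" using f by (simp add: perp_right_def)
    then show "Dom C g = Cod C (Comp C f h)" using Cod_Comp that by simp
  qed (use that in simp)
qed

lemma subset_perp_left_perp_right: "M \<subseteq> perp_left C E (perp_right C E M)"
  using M_Mor by (auto simp: perp_left_def perp_right_def)

end

lemma precomp_in_ideal:
  assumes "is_ideal C I" "i \<in> I" "h \<in> Mor C" "Cod C h = Dom C i"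
  shows "Comp C i h \<in> I"
proof -
  have i: "i \<in> Mor C" using assms(1,2) by (auto simp: is_ideal_def)
  have ih: "Comp C i h \<in> Mor C" "Cod C (Comp C i h) = Cod C i"
    using Comp_in_Hom[of h "Dom C h" "Dom C i" i "Cod C i"] i assms(3,4) by (auto simp: Hom_iff)
  have "Comp C (Id C (Cod C i)) (Comp C i h) \<in> I"
    using assms i Id_in_Hom[OF Cod_in_Ob[OF i]] by (auto simp: is_ideal_def Hom_iff)
  then show ?thesis using Comp_Id_left[OF ih(1)] ih(2) by simp
qed

end

locale additive_realization = biadditive_extfun C E
  for C :: "('o, 'm, 'z) addcat_scheme" and E :: "('o, 'm, 'e) extfun" +
  fixes s :: "('e, 'm) realization"
  assumes additive: "is_additive C"
    and ET2: "ET2 C E s"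
begin

lemma realization_typed:
  assumes "s \<delta> x y"
  shows "x \<in> Mor C" "y \<in> Mor C" "Cod C x = Dom C y" "\<delta> \<in> Ext E (Cod C y) (Dom C x)"
  using ET2 assms by (simp_all add: ET2_def)

lemma split_realizes_zero:
  "A \<in> Ob C \<Longrightarrow> X \<in> Ob C \<Longrightarrow> is_biprod C A X P iA iX pA pX \<Longrightarrow> s (EZero E X A) iA pX"
  using ET2 by (simp add: ET2_def)

lemma realization_morphism:
  assumes "s \<delta> x y" "s \<delta>' x' y'" "a \<in> Hom C (Dom C x) (Dom C x')" "c \<in> Hom C (Cod C y) (Cod C y')"
    and "Push E (Cod C y) a \<delta> = Pull E (Dom C x') c \<delta>'"
  obtains b where "b \<in> Hom C (Cod C x) (Cod C x')" "Comp C b x = Comp C x' a" "Comp C y' b = Comp C c y"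
proof -
  note lift = ET2[unfolded ET2_def, THEN conjunct2, THEN conjunct2, THEN conjunct2, THEN conjunct2,
    THEN conjunct1]
  show thesis using lift[rule_format, OF assms] that by blast
qed

lemma lift_along_deflation:
  assumes \<delta>: "s \<delta> x y" and g: "g \<in> Hom C X (Cod C y)"
    and g\<delta>: "Pull E (Dom C x) g \<delta> = EZero E X (Dom C x)"
  obtains h where "h \<in> Hom C X (Cod C x)" "Comp C y h = g"
proof -
  define A where "A = Dom C x"
  have A: "A \<in> Ob C" and X: "X \<in> Ob C" and gm: "g \<in> Mor C"
    using realization_typed(1)[OF \<delta>] g Dom_in_Ob by (auto simp: A_def Hom_iff)
  obtain P iA iX pA pX where bp: "is_biprod C A X P iA iX pA pX"
    using additive A X unfolding is_additive_def by blast
  then have iA: "iA \<in> Hom C A P" and iX: "iX \<in> Hom C X P" and pX: "pX \<in> Hom C P X"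
    and pX_iX: "Comp C pX iX = Id C X"
    by (simp_all add: is_biprod_def)
  have "Push E (Cod C pX) (Id C A) (EZero E X A) = Pull E A g \<delta>"
    using Push_Id[OF X A EZero_in_Ext[OF X A]] pX g\<delta> by (simp add: Hom_iff A_def)
  then obtain b where b: "b \<in> Hom C P (Cod C x)" and yb: "Comp C y b = Comp C g pX"
    using realization_morphism[OF split_realizes_zero[OF A X bp] \<delta>, of "Id C A" g]
      Id_in_Hom[OF A] g iA pX by (auto simp: Hom_iff A_def)
  show thesis
  proof
    show "Comp C b iX \<in> Hom C X (Cod C x)" using Comp_in_Hom[OF iX b] .
    have "Comp C y (Comp C b iX) = Comp C (Comp C y b) iX"
      using Comp_assoc b iX realization_typed[OF \<delta>] by (auto simp: Hom_iff)
    also have "\<dots> = Comp C g (Comp C pX iX)"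
      using Comp_assoc yb iX pX gm g by (auto simp: Hom_iff)
    also have "\<dots> = g" using pX_iX Comp_Id_right[OF gm] g by (simp add: Hom_iff)
    finally show "Comp C y (Comp C b iX) = g" .
  qed
qed

lemma triangle_morphism_Id_Push:
  assumes "is_triangle_morphism C E s \<delta> x y \<delta>' x' y' a b (Id C (Cod C y))"
  shows "\<delta>' = Push E (Cod C y) a \<delta>"
proof -
  have \<delta>': "s \<delta>' x' y'" and Y: "Cod C y \<in> Ob C"
    and push: "Push E (Cod C y) a \<delta> = Pull E (Dom C x') (Id C (Cod C y)) \<delta>'"
    and "Id C (Cod C y) \<in> Hom C (Cod C y) (Cod C y')"
    using assms realization_typed Cod_in_Ob by (auto simp: is_triangle_morphism_def)
  then have "Cod C y' = Cod C y" using Id_in_Hom[OF Y] by (simp add: Hom_iff)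
  then show ?thesis
    using push Pull_Id[OF Dom_in_Ob Y] realization_typed[OF \<delta>'] by simp
qed

lemma perp_left_perp_right_subset:
  assumes I: "is_ideal C I" and precovering: "special_precovering C E s I"
  shows "perp_left C E (perp_right C E I) \<subseteq> I"
proof
  fix g assume g: "g \<in> perp_left C E (perp_right C E I)"
  then have gm: "g \<in> Mor C" by (simp add: perp_left_def)
  obtain i \<delta> x y \<delta>' x' j b where i: "i \<in> I" "Cod C i = Cod C g" and y: "Cod C y = Cod C g"
    and tm: "is_triangle_morphism C E s \<delta> x y \<delta>' x' i j b (Id C (Cod C g))"
    and j: "j \<in> perp_right C E I"
    using precovering Cod_in_Ob[OF gm]
    unfolding special_precovering_def is_special_precover_def by blast
  have \<delta>: "s \<delta> x y" and \<delta>': "s \<delta>' x' i" and jh: "j \<in> Hom C (Dom C x) (Dom C x')"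
    using tm by (simp_all add: is_triangle_morphism_def)
  have "\<delta>' = Push E (Cod C g) j \<delta>" using triangle_morphism_Id_Push tm y by metis
  then have "Pull E (Dom C x') g \<delta>' = EZero E (Dom C g) (Dom C x')"
    using g j realization_typed(4)[OF \<delta>] y jh by (auto simp: perp_left_def Hom_iff)
  then obtain h where h: "h \<in> Hom C (Dom C g) (Cod C x')" and ih: "Comp C i h = g"
    using lift_along_deflation[OF \<delta>', of g "Dom C g"] gm i(2) by (auto simp: Hom_iff)
  show "g \<in> I"
    using precomp_in_ideal[OF I i(1)] h ih realization_typed(3)[OF \<delta>'] by (auto simp: Hom_iff)
qed

end

theorem theorem3p8:
  fixes C :: "('o, 'm) addcat" and E :: "('o, 'm, 'e) extfun" and s :: "('e, 'm) realization"
    and I :: "'m set"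
  assumes "is_additive C"
    and "ET1 C E"
    and "ET2 C E s"
    and "is_ideal C I"
    and "special_precovering C E s I"
  shows "is_cotorsion_pair C E I (perp_right C E I) \<and> I = perp_left C E (perp_right C E I)"
proof -
  interpret additive_realization C E s
    using assms(1-3) by unfold_locales (simp_all add: is_additive_def)
  have "I \<subseteq> Mor C" using assms(4) by (simp add: is_ideal_def)
  then have "I = perp_left C E (perp_right C E I)"
    using subset_perp_left_perp_right perp_left_perp_right_subset[OF assms(4,5)] by blast
  then show ?thesis
    using assms(4) is_ideal_perp_right \<open>I \<subseteq> Mor C\<close> by (simp add: is_cotorsion_pair_def)
qed

end
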